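(* Let $m,k,n\ge1$ be integers; let $\lambda_i,\mu_i>0$ ($i\le k$), $\alpha_j,\beta_j,u_j,v_j>0$ ($j\le n$); let $\theta:\{0,\dots,m\}\to\mathbb{R}$ satisfy $0\le\theta\le1$, $\theta(b)>0$ for $b<m$, $\theta(m)=0$. Consider the CTMC on the set of vectors $w=(x_1,\dots,x_k;a_1,\dots,a_n)$, $x_i\in\mathbb{Z}_{\ge0}$, $a_j\in\{I,W,T\}$, with $\mathrm{busy}(w)=\sum_i x_i+\sum_j1_{\{a_j=T\}}\le m$, whose only nonzero rates are: $x\to x+e_i$ at rate $\lambda_i\theta(\mathrm{busy}(w))$ and $x+e_i\to x$ at rate $(x_i+1)\mu_i$; and, for each $j$ changing only $a_j$: $I\to W$ at rate $\alpha_j$, $W\to I$ at rate $\beta_j$, $W\to T$ at rate $u_j\theta(\mathrm{busy}(w))$ ($w$ the current state), $T\to W$ at rate $v_j$. Its steady state distribution has the form $p(w)=B\big(\prod_{r=0}^{\mathrm{busy}(w)-1}\theta(r)\big)\big(\prod_{i}\rho_i^{x_i}/x_i!\big)\prod_j(\alpha_j/\beta_j)^{1_{\{a_j=W\}}}(\alpha_ju_j/(\beta_jv_j))^{1_{\{a_j=T\}}}$, $\rho_i=\lambda_i/\mu_i$, with normalizing constant $B$. Let $\rho=\sum_{i=1}^k\rho_i$ and $\mathrm{i}=\sqrt{-1}$. For $j\in\{1,\dots,n\}$ let $P[I_j]$ be the steady state probability that $a_j=I$, and define $$c_{j,b}=\frac1n\sum_{t=0}^{n-1}\prod_{l\in\{1,\dots,n\}\setminus\{j\}}\Big[1+\frac{\alpha_l}{\beta_l}+e^{\frac{-2\pi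 \mathrm{i} t}{n}}\frac{\alpha_lu_l}{\beta_lv_l}\Big]e^{\frac{2\pi \mathrm{i} tb}{n}}\qquad\forall b\in\{0,1,\dots,\min[n-1,m]\}.$$ Then $$P[I_j]=B\sum_{b=0}^{\min[n-1,m]}\sum_{x=0}^{m-b}\Big(\prod_{r=0}^{x+b-1}\theta(r)\Big)\frac{\rho^x}{x!}c_{j,b}.$$ In the special case with no non-persistent users (i.e. $\rho\to0$), $$P[I_j]=\tilde B\sum_{b=0}^{\min[n-1,m]}\Big(\prod_{r=0}^{b-1}\theta(r)\Big)c_{j,b},$$ where $\tilde B$ is the normalizing constant of that special case.
   Context: Multi-channel access model with $m$ channels, $k$ classes of non-persistent users and $n$ persistent users with activity states Idle ($I$), Waiting ($W$), Transmitting ($T$). Empty products $\prod_{r=0}^{-1}\theta(r)$ equal $1$. In the case with no non-persistent users, the steady state probability of persistent configuration $a$ (with $\sum_j1_{\{a_j=T\}}\le m$) is $\tilde B\big(\prod_{r=0}^{\sum_j1_{\{a_j=T\}}-1}\theta(r)\big)\prod_j(\alpha_j/\beta_j)^{1_{\{a_j=W\}}}(\alpha_ju_j/(\beta_jv_j))^{1_{\{a_j=T\}}}$. *)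

theory Defs
  imports Complex_Main
begin

datatype act = Idle | Wait | Trans

text \<open>A state is a pair (x, a): x i = number of active class-i non-persistent users
  (i in 1..k, x i = 0 outside), a j = activity of persistent user j (j in 1..n, Idle outside).\<close>

definition nT :: "nat \<Rightarrow> (nat \<Rightarrow> act) \<Rightarrow> nat" where
  "nT n a = card {j \<in> {1..n}. a j = Trans}"

definition busy :: "nat \<Rightarrow> nat \<Rightarrow> (nat \<Rightarrow> nat) \<Rightarrow> (nat \<Rightarrow> act) \<Rightarrow> nat" where
  "busy k n x a = (\<Sum>i=1..k. x i) + nT n a"

definition states :: "nat \<Rightarrow> nat \<Rightarrow> nat \<Rightarrow> ((nat \<Rightarrow> nat) \<times> (nat \<Rightarrow> act)) set" where
  "states m k n = {(x, a). (\<forall>i. i \<notin> {1..k} \<longrightarrow> x i = 0) \<and> (\<forall>j. j \<notin> {1..n} \<longrightarrow> a j = Idle)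
                          \<and> busy k n x a \<le> m}"

definition thprod :: "(nat \<Rightarrow> real) \<Rightarrow> nat \<Rightarrow> real" where
  "thprod theta b = (\<Prod>r<b. theta r)"

definition pfactor :: "nat \<Rightarrow> (nat \<Rightarrow> real) \<Rightarrow> (nat \<Rightarrow> real) \<Rightarrow> (nat \<Rightarrow> real) \<Rightarrow> (nat \<Rightarrow> real)
    \<Rightarrow> (nat \<Rightarrow> act) \<Rightarrow> real" where
  "pfactor n alpha beta u v a =
     (\<Prod>j=1..n. (alpha j / beta j) ^ (if a j = Wait then 1 else 0)
                * (alpha j * u j / (beta j * v j)) ^ (if a j = Trans then 1 else 0))"

definition weight :: "nat \<Rightarrow> nat \<Rightarrow> (nat \<Rightarrow> real) \<Rightarrow> (nat \<Rightarrow> real) \<Rightarrow> (nat \<Rightarrow> real) \<Rightarrow> (nat \<Rightarrow> real)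
    \<Rightarrow> (nat \<Rightarrow> real) \<Rightarrow> (nat \<Rightarrow> real) \<Rightarrow> (nat \<Rightarrow> real)
    \<Rightarrow> (nat \<Rightarrow> nat) \<times> (nat \<Rightarrow> act) \<Rightarrow> real" where
  "weight k n lam mu alpha beta u v theta w =
     (case w of (x, a) \<Rightarrow>
        thprod theta (busy k n x a)
        * (\<Prod>i=1..k. (lam i / mu i) ^ x i / fact (x i))
        * pfactor n alpha beta u v a)"

definition normB where
  "normB m k n lam mu alpha beta u v theta =
     1 / (\<Sum>w\<in>states m k n. weight k n lam mu alpha beta u v theta w)"

definition probIdle where
  "probIdle m k n lam mu alpha beta u v theta j =
     (\<Sum>w\<in>{w \<in> states m k n. snd w j = Idle}.
        normB m k n lam mu alpha beta u v theta * weight k n lam mu alpha beta u v theta w)"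

text \<open>Special case without non-persistent users: configurations a with at most m transmitting.\<close>
definition pstates :: "nat \<Rightarrow> nat \<Rightarrow> (nat \<Rightarrow> act) set" where
  "pstates m n = {a. (\<forall>j. j \<notin> {1..n} \<longrightarrow> a j = Idle) \<and> nT n a \<le> m}"

definition pweight where
  "pweight n alpha beta u v theta a = thprod theta (nT n a) * pfactor n alpha beta u v a"

definition normBt where
  "normBt m n alpha beta u v theta = 1 / (\<Sum>a\<in>pstates m n. pweight n alpha beta u v theta a)"

definition probIdle_p where
  "probIdle_p m n alpha beta u v theta j =
     (\<Sum>a\<in>{a \<in> pstates m n. a j = Idle}. normBt m n alpha beta u v theta * pweight n alpha beta u v theta a)"

definition cjb :: "nat \<Rightarrow> (nat \<Rightarrow> real) \<Rightarrow> (nat \<Rightarrow> real) \<Rightarrow> (nat \<Rightarrow> real) \<Rightarrow> (nat \<Rightarrow> real)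
    \<Rightarrow> nat \<Rightarrow> nat \<Rightarrow> complex" where
  "cjb n alpha beta u v j b =
     (1 / of_nat n) * (\<Sum>t<n.
        (\<Prod>l\<in>{1..n} - {j}. 1 + complex_of_real (alpha l / beta l)
             + exp (- 2 * of_real pi * \<i> * of_nat t / of_nat n) * complex_of_real (alpha l * u l / (beta l * v l)))
        * exp (2 * of_real pi * \<i> * of_nat t * of_nat b / of_nat n))"

end

theory Submission
  imports Defs "HOL-Analysis.Complex_Transcendental"
begin

(* Summing the product form over the states with a_j = I factorizes.  Grouping the
   occupancy vectors x of the non-persistent classes by their total s, the multinomial
   theorem turns the sum of prod_i rho_i^(x_i) / x_i! into rho^s / s!.  Grouping the
   configurations of the other persistent users by their number b of transmitting users
   gives the coefficient of z^b in the generating polynomial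
   prod_{l <> j} (1 + alpha_l/beta_l + z alpha_l u_l/(beta_l v_l)).  This polynomial has
   degree at most n - 1, so evaluating it at the n-th roots of unity and applying the
   inverse discrete Fourier transform recovers that coefficient, which is c_{j,b}.
   Without non-persistent users the same computation applies with s = 0. *)

definition configs :: "nat set \<Rightarrow> (nat \<Rightarrow> act) set" where
  "configs L = {a. \<forall>l. l \<notin> L \<longrightarrow> a l = Idle}"

lemma UNIV_act: "(UNIV :: act set) = {Idle, Wait, Trans}"
  using act.exhaust by auto

lemma finite_configs: "finite L \<Longrightarrow> finite (configs L)"
proof -
  assume "finite L"
  then have "finite {a :: nat \<Rightarrow> act. \<forall>l. (l \<in> L \<longrightarrow> a l \<in> UNIV) \<and> (l \<notin> L \<longrightarrow> a l = Idle)}"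
    by (intro finite_set_of_finite_funs) (auto simp: UNIV_act)
  then show ?thesis by (simp add: configs_def)
qed

lemma sum_configs_prod_power_card_Trans:
  fixes g :: "nat \<Rightarrow> act \<Rightarrow> 'b::comm_ring_1" and z :: 'b
  assumes "finite L"
  shows "(\<Sum>a\<in>configs L. (\<Prod>l\<in>L. g l (a l)) * z ^ card {l\<in>L. a l = Trans})
         = (\<Prod>l\<in>L. g l Idle + g l Wait + z * g l Trans)"
  using assms
proof (induction L rule: finite_induct)
  case empty
  have "configs {} = {\<lambda>_. Idle}" by (auto simp: configs_def)
  then show ?case by simp
next
  case (insert i L)
  define F where "F a = (\<Prod>l\<in>L. g l (a l)) * z ^ card {l\<in>L. a l = Trans}" for a
  have F_upd: "F (a(i := s)) = F a" for a s
  proof -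
    have "(\<Prod>l\<in>L. g l ((a(i := s)) l)) = (\<Prod>l\<in>L. g l (a l))"
      and "{l\<in>L. (a(i := s)) l = Trans} = {l\<in>L. a l = Trans}"
      using insert.hyps by (auto intro!: prod.cong)
    then show ?thesis unfolding F_def by (simp only:)
  qed
  have split_i: "(\<Prod>l\<in>insert i L. g l (a l)) * z ^ card {l\<in>insert i L. a l = Trans}
      = (g i (a i) * z ^ (if a i = Trans then 1 else 0)) * F a" for a
  proof -
    have "{l\<in>insert i L. a l = Trans} = (if a i = Trans then insert i {l\<in>L. a l = Trans} else {l\<in>L. a l = Trans})"
      by auto
    then show ?thesis
      unfolding F_def using insert.hyps by (simp add: card_insert_disjoint power_add algebra_simps)
  qed
  have "(\<Sum>a\<in>configs (insert i L). (\<Prod>l\<in>insert i L. g l (a l)) * z ^ card {l\<in>insert i L. a l = Trans})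
      = (\<Sum>(s, a)\<in>UNIV \<times> configs L. (g i s * z ^ (if s = Trans then 1 else 0)) * F a)"
    unfolding split_i
    by (rule sum.reindex_bij_witness[where j = "\<lambda>a. (a i, a(i := Idle))" and i = "\<lambda>(s, a). a(i := s)"])
       (use insert.hyps in \<open>auto simp: configs_def F_upd\<close>)
  also have "\<dots> = (\<Sum>s\<in>UNIV. g i s * z ^ (if s = Trans then 1 else 0)) * (\<Sum>a\<in>configs L. F a)"
    by (simp add: sum_product sum.cartesian_product case_prod_beta)
  finally show ?case
    using insert unfolding F_def by (simp add: UNIV_act algebra_simps)
qed

lemma dvd_add_diff_iff_eq:
  fixes n b d :: nat
  assumes "b < n" "d < n"
  shows "n dvd (b + n - d) \<longleftrightarrow> d = b"
proof
  assume "n dvd (b + n - d)"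
  then obtain q where q: "b + n - d = n * q" by (auto elim: dvdE)
  have "0 < n * q" "n * q < n * 2" using assms q by linarith+
  then have "q = 1" by simp
  then show "d = b" using assms q by simp
qed simp

lemma sum_powers_root_of_unity:
  fixes \<omega> :: "'a::field_char_0"
  assumes root: "\<And>e. \<omega> ^ e = 1 \<longleftrightarrow> n dvd e"
  shows "(\<Sum>t<n. (\<omega> ^ e) ^ t) = (if n dvd e then of_nat n else 0)"
proof -
  have "(\<omega> ^ e) ^ n = 1"
    by (simp add: root flip: power_mult)
  then show ?thesis
    by (simp add: root sum_gp_strict)
qed

lemma dft_coeff_extraction:
  fixes \<omega> :: "'a::field_char_0" and c :: "nat \<Rightarrow> 'a"
  assumes root: "\<And>e. \<omega> ^ e = 1 \<longleftrightarrow> n dvd e" and "b < n"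
  shows "1 / of_nat n * (\<Sum>t<n. (\<Sum>d<n. c d * inverse (\<omega> ^ t) ^ d) * (\<omega> ^ t) ^ b) = c b"
proof -
  have "\<omega> \<noteq> 0"
    using root[of n] \<open>b < n\<close> by (auto simp: power_0_left)
  \<comment> \<open>\<omega> ^ (n - d) stands for \<omega> ^ (- d), keeping exponents natural.\<close>
  have twist: "inverse (\<omega> ^ t) ^ d * (\<omega> ^ t) ^ b = (\<omega> ^ (b + n - d)) ^ t" if "d < n" for t d
  proof -
    have "(b + n - d) * t + d * t = b * t + n * t"
      using that by (simp flip: add_mult_distrib)
    then have "(\<omega> ^ (b + n - d)) ^ t * (\<omega> ^ t) ^ d = \<omega> ^ (b * t) * (\<omega> ^ n) ^ t"
      by (metis power_add power_mult mult.commute)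
    also have "\<dots> = (\<omega> ^ t) ^ b"
      by (simp add: root flip: power_mult add: mult.commute)
    finally show ?thesis
      using \<open>\<omega> \<noteq> 0\<close> by (simp add: field_simps power_inverse)
  qed
  have "(\<Sum>t<n. (\<Sum>d<n. c d * inverse (\<omega> ^ t) ^ d) * (\<omega> ^ t) ^ b)
      = (\<Sum>t<n. \<Sum>d<n. c d * (\<omega> ^ (b + n - d)) ^ t)"
    by (simp add: sum_distrib_right mult.assoc twist)
  also have "\<dots> = (\<Sum>d<n. c d * (\<Sum>t<n. (\<omega> ^ (b + n - d)) ^ t))"
    by (subst sum.swap) (simp add: sum_distrib_left)
  also have "\<dots> = (\<Sum>d<n. c d * (if d = b then of_nat n else 0))"
    by (intro sum.cong refl) (simp add: sum_powers_root_of_unity[OF root] dvd_add_diff_iff_eq[OF \<open>b < n\<close>])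
  also have "\<dots> = of_nat n * c b"
    using \<open>b < n\<close> by (simp add: if_distrib cong: if_cong)
  finally show ?thesis
    using \<open>b < n\<close> by simp
qed

lemma exp_2pi_div_power_eq_1_iff:
  assumes "n \<ge> 1"
  shows "exp (2 * of_real pi * \<i> / of_nat n) ^ e = 1 \<longleftrightarrow> n dvd e"
  using complex_root_unity_eq_1[OF assms, of e] by (simp add: exp_of_nat_mult[symmetric] mult.commute)

lemma pfactor_configs:
  assumes "L \<subseteq> {1..n}" "a \<in> configs L"
  shows "pfactor n alpha beta u v a
       = (\<Prod>l\<in>L. (alpha l / beta l) ^ (if a l = Wait then 1 else 0)
                  * (alpha l * u l / (beta l * v l)) ^ (if a l = Trans then 1 else 0))"
  unfolding pfactor_def using assms by (intro prod.mono_neutral_right) (auto simp: configs_def)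

lemma nT_configs:
  assumes "L \<subseteq> {1..n}" "a \<in> configs L"
  shows "nT n a = card {l\<in>L. a l = Trans}"
proof -
  have "{l\<in>{1..n}. a l = Trans} = {l\<in>L. a l = Trans}"
    using assms by (auto simp: configs_def)
  then show ?thesis unfolding nT_def by simp
qed

lemma nT_configs_le:
  assumes "L \<subseteq> {1..n}" "a \<in> configs L"
  shows "nT n a \<le> card L"
  unfolding nT_configs[OF assms] using assms(1) finite_subset
  by (intro card_mono) auto

definition trans_weight :: "nat \<Rightarrow> (nat \<Rightarrow> real) \<Rightarrow> (nat \<Rightarrow> real) \<Rightarrow> (nat \<Rightarrow> real) \<Rightarrow> (nat \<Rightarrow> real)
    \<Rightarrow> nat set \<Rightarrow> nat \<Rightarrow> real" where
  "trans_weight n alpha beta u v L b = (\<Sum>a\<in>{a\<in>configs L. nT n a = b}. pfactor n alpha beta u v a)"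

lemma sum_configs_by_nT:
  fixes H :: "nat \<Rightarrow> 'b::real_algebra_1"
  assumes "L \<subseteq> {1..n}"
  shows "(\<Sum>a\<in>{a\<in>configs L. nT n a \<le> m}. of_real (pfactor n alpha beta u v a) * H (nT n a))
       = (\<Sum>b=0..min (card L) m. of_real (trans_weight n alpha beta u v L b) * H b)"
proof -
  have "finite L"
    using assms by (rule finite_subset) simp
  then have fin: "finite {a\<in>configs L. nT n a \<le> m}"
    by (simp add: finite_configs)
  have img: "nT n ` {a\<in>configs L. nT n a \<le> m} \<subseteq> {0..min (card L) m}"
    using nT_configs_le[OF assms] by auto
  have "(\<Sum>a\<in>{a\<in>configs L. nT n a \<le> m}. of_real (pfactor n alpha beta u v a) * H (nT n a))
      = (\<Sum>b=0..min (card L) m. \<Sum>a\<in>{a\<in>configs L. nT n a = b}. of_real (pfactor n alpha beta u v a) * H b)"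
    by (subst sum.group[OF fin _ img, symmetric]) (auto intro!: sum.cong)
  then show ?thesis
    by (simp add: trans_weight_def sum_distrib_right)
qed

lemma prod_eq_trans_weight_poly:
  fixes z :: "'b::{comm_ring_1, real_algebra_1}"
  assumes "L \<subseteq> {1..n}"
  shows "(\<Prod>l\<in>L. 1 + of_real (alpha l / beta l) + z * of_real (alpha l * u l / (beta l * v l)))
       = (\<Sum>b\<le>card L. of_real (trans_weight n alpha beta u v L b) * z ^ b)"
proof -
  have "finite L"
    using assms by (rule finite_subset) simp
  have "(\<Prod>l\<in>L. 1 + of_real (alpha l / beta l) + z * of_real (alpha l * u l / (beta l * v l)))
      = (\<Sum>a\<in>configs L. of_real (pfactor n alpha beta u v a) * z ^ nT n a)"
    using sum_configs_prod_power_card_Trans[OF \<open>finite L\<close>,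
        of "\<lambda>l s. of_real ((alpha l / beta l) ^ (if s = Wait then 1 else 0)
                * (alpha l * u l / (beta l * v l)) ^ (if s = Trans then 1 else 0))" z]
    by (simp add: pfactor_configs[OF assms] nT_configs[OF assms] cong: sum.cong)
  also have "configs L = {a\<in>configs L. nT n a \<le> card L}"
    using nT_configs_le[OF assms] by auto
  finally show ?thesis
    using sum_configs_by_nT[OF assms, where m = "card L" and H = "\<lambda>b. z ^ b"] by (simp add: atLeast0AtMost)
qed

lemma cjb_eq_trans_weight:
  assumes "j \<in> {1..n}" "b < n"
  shows "cjb n alpha beta u v j b = of_real (trans_weight n alpha beta u v ({1..n} - {j}) b)"
proof -
  define \<omega> :: complex where "\<omega> = exp (2 * of_real pi * \<i> / of_nat n)"
  define c where "c d = complex_of_real (trans_weight n alpha beta u v ({1..n} - {j}) d)" for d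
  have root: "\<omega> ^ e = 1 \<longleftrightarrow> n dvd e" for e
    unfolding \<omega>_def using assms by (intro exp_2pi_div_power_eq_1_iff) simp
  have \<omega>_power: "\<omega> ^ t = exp (2 * of_real pi * \<i> * of_nat t / of_nat n)" for t
    unfolding \<omega>_def by (simp flip: exp_of_nat_mult add: mult.commute)
  have exp_conj: "exp (- 2 * of_real pi * \<i> * of_nat t / of_nat n) = inverse (\<omega> ^ t)" for t
    unfolding \<omega>_power by (subst exp_minus[symmetric]) simp
  have exp_power: "exp (2 * of_real pi * \<i> * of_nat t * of_nat b / of_nat n) = (\<omega> ^ t) ^ b" for t
    unfolding \<omega>_power by (simp flip: exp_of_nat_mult add: mult.commute)
  have "card ({1..n} - {j}) = n - 1"
    using assms by simp
  then have poly: "(\<Prod>l\<in>{1..n} - {j}. 1 + of_real (alpha l / beta l) + z * of_real (alpha l * u l / (beta l * v l)))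
      = (\<Sum>d<n. c d * z ^ d)" for z :: complex
    using prod_eq_trans_weight_poly[of "{1..n} - {j}" n alpha beta z u v] assms
    by (simp add: c_def lessThan_Suc_atMost[symmetric])
  have "cjb n alpha beta u v j b = 1 / of_nat n * (\<Sum>t<n. (\<Sum>d<n. c d * inverse (\<omega> ^ t) ^ d) * (\<omega> ^ t) ^ b)"
    unfolding cjb_def poly exp_conj exp_power ..
  also have "\<dots> = c b"
    using dft_coeff_extraction[OF root \<open>b < n\<close>] .
  finally show ?thesis
    unfolding c_def .
qed

lemma finite_bounded_occupancies:
  assumes "finite L"
  shows "finite {x :: nat \<Rightarrow> nat. (\<forall>i. i \<notin> L \<longrightarrow> x i = 0) \<and> sum x L \<le> s}"
proof (rule finite_subset)
  show "{x. (\<forall>i. i \<notin> L \<longrightarrow> x i = 0) \<and> sum x L \<le> s}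
      \<subseteq> {x. \<forall>i. (i \<in> L \<longrightarrow> x i \<in> {0..s}) \<and> (i \<notin> L \<longrightarrow> x i = 0)}"
    using assms by (auto dest: member_le_sum[of _ L] intro: order_trans)
  show "finite {x :: nat \<Rightarrow> nat. \<forall>i. (i \<in> L \<longrightarrow> x i \<in> {0..s}) \<and> (i \<notin> L \<longrightarrow> x i = 0)}"
    using assms by (intro finite_set_of_finite_funs) auto
qed

lemma sum_occupancies_multinomial:
  fixes rho :: "nat \<Rightarrow> 'a::field_char_0"
  assumes "finite L"
  shows "(\<Sum>x\<in>{x. (\<forall>i. i \<notin> L \<longrightarrow> x i = 0) \<and> sum x L = s}. \<Prod>i\<in>L. rho i ^ x i / fact (x i))
         = (\<Sum>i\<in>L. rho i) ^ s / fact s"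
  using assms
proof (induction L arbitrary: s rule: finite_induct)
  case empty
  have "{x :: nat \<Rightarrow> nat. (\<forall>i. i \<notin> {} \<longrightarrow> x i = 0) \<and> sum x {} = s} = (if s = 0 then {\<lambda>_. 0} else {})"
    by auto
  then show ?case by simp
next
  case (insert i L)
  define X where "X s = {x :: nat \<Rightarrow> nat. (\<forall>i. i \<notin> L \<longrightarrow> x i = 0) \<and> sum x L = s}" for s
  define F where "F x = (\<Prod>l\<in>L. rho l ^ x l / fact (x l))" for x
  have fin_X: "finite (X s)" for s
    by (rule finite_subset[OF _ finite_bounded_occupancies[OF insert.hyps(1), of s]]) (auto simp: X_def)
  have sum_upd: "(\<Sum>l\<in>L. if l = i then c else x l) = sum x L" for x c
    using insert.hyps by (intro sum.cong) auto
  have split_i: "(\<Prod>l\<in>insert i L. rho l ^ x l / fact (x l)) = rho i ^ x i / fact (x i) * F x" for x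
    unfolding F_def using insert.hyps by simp
  have F_upd: "F (x(i := c)) = F x" for x c
    unfolding F_def using insert.hyps by (intro prod.cong) auto
  have "(\<Sum>x\<in>{x. (\<forall>l. l \<notin> insert i L \<longrightarrow> x l = 0) \<and> sum x (insert i L) = s}. \<Prod>l\<in>insert i L. rho l ^ x l / fact (x l))
      = (\<Sum>(c, y)\<in>Sigma {0..s} (\<lambda>c. X (s - c)). rho i ^ c / fact c * F y)"
    unfolding split_i
    by (rule sum.reindex_bij_witness[where j = "\<lambda>x. (x i, x(i := 0))" and i = "\<lambda>(c, y). y(i := c)"])
       (use insert.hyps in \<open>auto simp: X_def sum_upd F_upd\<close>)
  also have "\<dots> = (\<Sum>c=0..s. rho i ^ c / fact c * (\<Sum>y\<in>X (s - c). F y))"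
    using fin_X by (simp add: sum.Sigma[symmetric] sum_distrib_left)
  also have "\<dots> = (\<Sum>c\<le>s. of_nat (s choose c) * rho i ^ c * (\<Sum>l\<in>L. rho l) ^ (s - c)) / fact s"
    unfolding X_def F_def insert.IH sum_divide_distrib atLeast0AtMost
    by (intro sum.cong refl) (simp add: binomial_fact field_simps)
  also have "\<dots> = (\<Sum>l\<in>insert i L. rho l) ^ s / fact s"
    using insert.hyps by (simp add: binomial_ring)
  finally show ?case .
qed

lemma sum_bounded_occupancies_by_total:
  fixes rho G :: "nat \<Rightarrow> 'a::field_char_0"
  assumes "finite L"
  shows "(\<Sum>x\<in>{x. (\<forall>i. i \<notin> L \<longrightarrow> x i = 0) \<and> sum x L \<le> M}. G (sum x L) * (\<Prod>i\<in>L. rho i ^ x i / fact (x i)))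
       = (\<Sum>s=0..M. G s * ((\<Sum>i\<in>L. rho i) ^ s / fact s))"
proof -
  let ?X = "{x :: nat \<Rightarrow> nat. (\<forall>i. i \<notin> L \<longrightarrow> x i = 0) \<and> sum x L \<le> M}"
  let ?P = "\<lambda>x. \<Prod>i\<in>L. rho i ^ x i / fact (x i)"
  have img: "(\<lambda>x. sum x L) ` ?X \<subseteq> {0..M}"
    by auto
  have "(\<Sum>x\<in>?X. G (sum x L) * ?P x) = (\<Sum>s=0..M. \<Sum>x\<in>{x\<in>?X. sum x L = s}. G s * ?P x)"
    by (subst sum.group[OF finite_bounded_occupancies[OF assms] _ img, symmetric]) (auto intro!: sum.cong)
  also have "\<dots> = (\<Sum>s=0..M. G s * ((\<Sum>i\<in>L. rho i) ^ s / fact s))"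
  proof (intro sum.cong refl)
    fix s assume "s \<in> {0..M}"
    then have "{x\<in>?X. sum x L = s} = {x. (\<forall>i. i \<notin> L \<longrightarrow> x i = 0) \<and> sum x L = s}"
      by auto
    then show "(\<Sum>x\<in>{x\<in>?X. sum x L = s}. G s * ?P x) = G s * ((\<Sum>i\<in>L. rho i) ^ s / fact s)"
      by (simp only: sum_distrib_left[symmetric] sum_occupancies_multinomial[OF assms])
  qed
  finally show ?thesis .
qed

lemma sum_weight_idle_states:
  assumes "j \<in> {1..n}"
  shows "(\<Sum>w\<in>{w\<in>states m k n. snd w j = Idle}. weight k n lam mu alpha beta u v theta w)
       = (\<Sum>b=0..min (n - 1) m. trans_weight n alpha beta u v ({1..n} - {j}) b
            * (\<Sum>s=0..m - b. thprod theta (s + b) * ((\<Sum>i=1..k. lam i / mu i) ^ s / fact s)))"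
proof -
  let ?A = "{a\<in>configs ({1..n} - {j}). nT n a \<le> m}"
  let ?X = "\<lambda>M. {x :: nat \<Rightarrow> nat. (\<forall>i. i \<notin> {1..k} \<longrightarrow> x i = 0) \<and> sum x {1..k} \<le> M}"
  let ?S = "\<lambda>b. \<Sum>s=0..m - b. thprod theta (s + b) * ((\<Sum>i=1..k. lam i / mu i) ^ s / fact s)"
  have "finite ?A"
    by (simp add: finite_configs)
  have "(\<Sum>w\<in>{w\<in>states m k n. snd w j = Idle}. weight k n lam mu alpha beta u v theta w)
      = (\<Sum>(a, x)\<in>Sigma ?A (\<lambda>a. ?X (m - nT n a)). weight k n lam mu alpha beta u v theta (x, a))"
    by (rule sum.reindex_bij_witness[where j = "\<lambda>(x, a). (a, x)" and i = "\<lambda>(a, x). (x, a)"])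
       (use assms in \<open>auto simp: states_def configs_def busy_def\<close>)
  also have "\<dots> = (\<Sum>a\<in>?A. \<Sum>x\<in>?X (m - nT n a). weight k n lam mu alpha beta u v theta (x, a))"
    by (rule sum.Sigma[symmetric]) (fact, blast intro: finite_bounded_occupancies finite_atLeastAtMost)
  also have "\<dots> = (\<Sum>a\<in>?A. pfactor n alpha beta u v a * ?S (nT n a))"
  proof (rule sum.cong[OF refl])
    fix a
    have "(\<Sum>x\<in>?X (m - nT n a). weight k n lam mu alpha beta u v theta (x, a))
        = pfactor n alpha beta u v a * (\<Sum>x\<in>?X (m - nT n a).
            thprod theta (sum x {1..k} + nT n a) * (\<Prod>i=1..k. (lam i / mu i) ^ x i / fact (x i)))"
      by (simp add: weight_def busy_def sum_distrib_left mult_ac)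
    also have "\<dots> = pfactor n alpha beta u v a * ?S (nT n a)"
      by (subst sum_bounded_occupancies_by_total[where G = "\<lambda>s. thprod theta (s + nT n a)"]) simp_all
    finally show "(\<Sum>x\<in>?X (m - nT n a). weight k n lam mu alpha beta u v theta (x, a))
        = pfactor n alpha beta u v a * ?S (nT n a)" .
  qed
  also have "\<dots> = (\<Sum>b=0..min (n - 1) m. trans_weight n alpha beta u v ({1..n} - {j}) b * ?S b)"
    using sum_configs_by_nT[where L = "{1..n} - {j}" and m = m and H = ?S] assms by simp
  finally show ?thesis .
qed

lemma sum_pweight_idle_pstates:
  assumes "j \<in> {1..n}"
  shows "(\<Sum>a\<in>{a\<in>pstates m n. a j = Idle}. pweight n alpha beta u v theta a)
       = (\<Sum>b=0..min (n - 1) m. trans_weight n alpha beta u v ({1..n} - {j}) b * thprod theta b)"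
proof -
  have "{a\<in>pstates m n. a j = Idle} = {a\<in>configs ({1..n} - {j}). nT n a \<le> m}"
    using assms by (auto simp: pstates_def configs_def)
  then show ?thesis
    using sum_configs_by_nT[where L = "{1..n} - {j}" and m = m and H = "thprod theta"] assms
    by (simp add: pweight_def mult.commute)
qed

theorem lemma3:
  fixes m k n j :: nat
    and lam mu alpha beta u v theta :: "nat \<Rightarrow> real"
  assumes "m \<ge> 1" "k \<ge> 1" "n \<ge> 1"
    and "\<forall>i\<in>{1..k}. lam i > 0 \<and> mu i > 0"
    and "\<forall>l\<in>{1..n}. alpha l > 0 \<and> beta l > 0 \<and> u l > 0 \<and> v l > 0"
    and "\<forall>b\<in>{0..m}. 0 \<le> theta b \<and> theta b \<le> 1"
    and "\<forall>b<m. theta b > 0"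
    and "theta m = 0"
    and "j \<in> {1..n}"
  shows "complex_of_real (probIdle m k n lam mu alpha beta u v theta j)
           = complex_of_real (normB m k n lam mu alpha beta u v theta)
             * (\<Sum>b=0..min (n - 1) m. \<Sum>x=0..m - b.
                  complex_of_real (thprod theta (x + b) * (\<Sum>i=1..k. lam i / mu i) ^ x / fact x)
                  * cjb n alpha beta u v j b)
         \<and> complex_of_real (probIdle_p m n alpha beta u v theta j)
           = complex_of_real (normBt m n alpha beta u v theta)
             * (\<Sum>b=0..min (n - 1) m. complex_of_real (thprod theta b) * cjb n alpha beta u v j b)"
proof
  have cjb: "cjb n alpha beta u v j b = of_real (trans_weight n alpha beta u v ({1..n} - {j}) b)"
    if "b \<in> {0..min (n - 1) m}" for b
    using that assms(3) by (intro cjb_eq_trans_weight[OF assms(9)]) auto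
  show "complex_of_real (probIdle m k n lam mu alpha beta u v theta j)
           = complex_of_real (normB m k n lam mu alpha beta u v theta)
             * (\<Sum>b=0..min (n - 1) m. \<Sum>x=0..m - b.
                  complex_of_real (thprod theta (x + b) * (\<Sum>i=1..k. lam i / mu i) ^ x / fact x)
                  * cjb n alpha beta u v j b)"
    unfolding probIdle_def sum_distrib_left[symmetric] sum_weight_idle_states[OF assms(9)]
    by (simp add: cjb sum_distrib_left sum_distrib_right mult_ac)
  show "complex_of_real (probIdle_p m n alpha beta u v theta j)
           = complex_of_real (normBt m n alpha beta u v theta)
             * (\<Sum>b=0..min (n - 1) m. complex_of_real (thprod theta b) * cjb n alpha beta u v j b)"
    unfolding probIdle_p_def sum_distrib_left[symmetric] sum_pweight_idle_pstates[OF assms(9)]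
    by (simp add: cjb mult_ac)
qed

end
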